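(* Let $(\alpha_N)_{N\ge0}\subseteq[0,1]$ converge to some $\alpha$, and let $L_N=\log_2(N)/5$ (rounded to an integer). For $q\in[0,1]$ let $Z_0,Z_1,\dots$ be a Galton–Watson-type process with $Z_0\sim$ Bernoulli$(q)$, where each individual of generation $0$ has a Binomial$(3,q)$ number of children and each individual of every later generation has a Binomial$(2,q)$ number of children, independently. Then there is $C'>0$, independent of $q$ and $N$, such that for all $N$, $$\Big|\mathbb E\big(Z_0(1-\alpha_N)^{Z_0+Z_1+\cdots+Z_{L_N-1}}\big)-g_{\alpha_N}(q)\Big|\le C'e^{-\alpha_NL_N},$$ and the same bound holds with $\mathbb E\big(Z_0(1-\alpha_N)^{Z_0+\cdots+Z_{L_N-1}}\mathbf 1_{\{Z_{L_N-1}=0\}}\big)$ in place of the first expectation.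
   Context: For $\alpha\in(0,1)$ let $g_\alpha(x)=\frac{(1-\sqrt{1-4(1-\alpha)x(1-x)})^3}{8(1-\alpha)^2x^2}$ for $x\in(0,1]$ and $g_\alpha(0)=0$; let $g_0(x)=x$ for $x\le1/2$ and $g_0(x)=(1-x)^3/x^2$ for $x>1/2$; for $\alpha=1$ set $g_1\equiv0$. *)

theory Defs
  imports "HOL-Probability.Probability"
begin

definition galpha :: "real \<Rightarrow> real \<Rightarrow> real" where
  "galpha a x =
     (if a = 1 then 0
      else if a = 0 then (if x \<le> 1/2 then x else (1 - x)^3 / x^2)
      else if x = 0 then 0
      else (1 - sqrt (1 - 4 * (1 - a) * x * (1 - x)))^3 / (8 * (1 - a)^2 * x^2))"

fun iid_sum :: "nat \<Rightarrow> nat pmf \<Rightarrow> nat pmf" where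
  "iid_sum 0 p = return_pmf 0"
| "iid_sum (Suc n) p = bind_pmf p (\<lambda>x. map_pmf (\<lambda>y. x + y) (iid_sum n p))"

definition offspring :: "real \<Rightarrow> nat \<Rightarrow> nat pmf" where
  "offspring q k = binomial_pmf (if k = 0 then 3 else 2) q"

text \<open>gw_from q k z n: law of the list [Z_k, ..., Z_(k+n-1)] given Z_k = z.\<close>
fun gw_from :: "real \<Rightarrow> nat \<Rightarrow> nat \<Rightarrow> nat \<Rightarrow> nat list pmf" where
  "gw_from q k z 0 = return_pmf []"
| "gw_from q k z (Suc n) =
     bind_pmf (iid_sum z (offspring q k)) (\<lambda>z'. map_pmf (Cons z) (gw_from q (Suc k) z' n))"

text \<open>gw_path q L: law of the list [Z_0, Z_1, ..., Z_L], with Z_0 ~ Bernoulli(q).\<close>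
definition gw_path :: "real \<Rightarrow> nat \<Rightarrow> nat list pmf" where
  "gw_path q L = bind_pmf (bernoulli_pmf q) (\<lambda>b. gw_from q 0 (of_bool b) (Suc L))"

definition LN :: "nat \<Rightarrow> nat" where
  "LN N = nat (round (log 2 (real N) / 5))"

end

theory Submission
  imports Defs
begin

text \<open>Write \<open>b = 1 - \<alpha>\<close> and \<open>T(u) = b (1 - q + q u)\<^sup>2\<close>, the generating function of a
  Binomial(2,q) family weighted by \<open>b\<close> per individual. Conditioning generation by generation,
  \<open>E[b\<^bsup>Z\<^sub>k + \<dots> + Z\<^bsub>k+m-1\<^esub>\<^esup> x\<^bsup>Z\<^bsub>k+m\<^esub>\<^esup> | Z\<^sub>k = z] = T\<^sup>m(x)\<^sup>z\<close> for \<open>k \<ge> 1\<close>, so the two expectations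
  equal \<open>q b (1 - q + q u)\<^sup>3\<close> with \<open>u = T\<^bsup>L-1\<^esup>(1)\<close> and \<open>u = T\<^bsup>L-2\<^esup>(0)\<close> respectively.
  On \<open>[0,1]\<close> the map \<open>T\<close> is monotone with fixed point \<open>h = b s\<^sup>2\<close>, where \<open>s\<close> is the smaller root
  of \<open>q b s\<^sup>2 - s + 1 - q = 0\<close>, and \<open>g\<^sub>\<alpha>(q) = q b s\<^sup>3 = q b (1 - q + q h)\<^sup>3\<close>. Comparing with the
  unweighted map gives \<open>T\<^sup>n(1) - T\<^sup>n(0) \<le> b\<^sup>n\<close>, hence both expectations are within
  \<open>3 b\<^bsup>L-1\<^esup> \<le> 3 e\<^sup>\<alpha> e\<^bsup>-\<alpha>L\<^esup>\<close> of \<open>g\<^sub>\<alpha>(q)\<close>.\<close>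

definition gw_step :: "real \<Rightarrow> real \<Rightarrow> real \<Rightarrow> real" where
  "gw_step b q u = b * (1 - q + q * u)^2"

lemma gw_step_iter_Suc:
  "(gw_step b q ^^ Suc n) x = b * (1 - q + q * (gw_step b q ^^ n) x)^2"
  by (simp add: gw_step_def)

lemma convex_comb_in_unit:
  fixes q u :: real
  assumes "0 \<le> q" "q \<le> 1" "0 \<le> u" "u \<le> 1"
  shows "0 \<le> 1 - q + q * u" "1 - q + q * u \<le> 1"
  using assms mult_left_le[of u q] by (auto intro: add_nonneg_nonneg)

lemma gw_step_iter_in_unit:
  assumes "0 \<le> q" "q \<le> 1" "0 \<le> b" "b \<le> 1" "0 \<le> x" "x \<le> 1"
  shows "0 \<le> (gw_step b q ^^ n) x \<and> (gw_step b q ^^ n) x \<le> 1"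
proof (induction n)
  case 0 then show ?case using assms by simp
next
  case (Suc n)
  then show ?case
    using convex_comb_in_unit[OF assms(1,2), of "(gw_step b q ^^ n) x"] assms(3,4)
    unfolding gw_step_iter_Suc by (auto simp: mult_le_one power_le_one)
qed

lemma gw_step_iter_mono:
  assumes "0 \<le> q" "q \<le> 1" "0 \<le> b" "b \<le> 1" "0 \<le> x" "x \<le> y" "y \<le> 1"
  shows "(gw_step b q ^^ n) x \<le> (gw_step b q ^^ n) y"
proof (induction n)
  case 0 then show ?case using assms by simp
next
  case (Suc n)
  have "0 \<le> 1 - q + q * (gw_step b q ^^ n) x"
    using convex_comb_in_unit(1)[OF assms(1,2)] gw_step_iter_in_unit[OF assms(1-5)] assms(6,7) by auto
  then show ?case
    using Suc assms(1,3) unfolding gw_step_iter_Suc by (auto intro!: mult_left_mono power_mono)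
qed

lemma gw_step_iter_le_weight_one:
  assumes q: "0 \<le> q" "q \<le> 1" and b: "0 \<le> b" "b \<le> 1" and x: "0 \<le> x" "x \<le> 1"
  shows "(gw_step b q ^^ n) x \<le> (gw_step 1 q ^^ n) x"
proof (induction n)
  case 0 then show ?case by simp
next
  case (Suc n)
  have "0 \<le> 1 - q + q * (gw_step b q ^^ n) x"
    using convex_comb_in_unit(1)[OF q] gw_step_iter_in_unit[OF q b x] by auto
  then have "(1 - q + q * (gw_step b q ^^ n) x)^2 \<le> (1 - q + q * (gw_step 1 q ^^ n) x)^2"
    using Suc q(1) by (auto intro!: power_mono mult_left_mono)
  then show ?case
    using b mult_left_le_one_le[of "(1 - q + q * (gw_step b q ^^ n) x)^2" b]
    unfolding gw_step_iter_Suc by simp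
qed

lemma gw_step_iter_diff_le:
  assumes q: "0 \<le> q" "q \<le> 1" and b: "0 \<le> b" "b \<le> 1" and xy: "0 \<le> x" "x \<le> y" "y \<le> 1"
  shows "(gw_step b q ^^ n) y - (gw_step b q ^^ n) x
           \<le> b^n * ((gw_step 1 q ^^ n) y - (gw_step 1 q ^^ n) x)"
proof (induction n)
  case 0 then show ?case by simp
next
  case (Suc n)
  define A B P Q where "A = (gw_step b q ^^ n) y" and "B = (gw_step b q ^^ n) x"
    and "P = (gw_step 1 q ^^ n) y" and "Q = (gw_step 1 q ^^ n) x"
  have "B \<le> A" "0 \<le> B" "A \<le> P" "B \<le> Q"
    unfolding A_def B_def P_def Q_def
    using gw_step_iter_mono[OF q b xy] gw_step_iter_in_unit[OF q b, of x n]
      gw_step_iter_le_weight_one[OF q b, of y n] gw_step_iter_le_weight_one[OF q b, of x n] xy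
    by auto
  moreover have "A - B \<le> b^n * (P - Q)"
    using Suc unfolding A_def B_def P_def Q_def .
  moreover have diff_sq: "c * (1 - q + q * v)^2 - c * (1 - q + q * u)^2
      = c * q * (v - u) * (2 * (1 - q) + q * (u + v))" for c u v :: real
    by (simp add: power2_eq_square algebra_simps)
  ultimately have "(A - B) * (2 * (1 - q) + q * (B + A)) \<le> (b^n * (P - Q)) * (2 * (1 - q) + q * (Q + P))"
    using q by (intro mult_mono add_mono mult_left_mono) auto
  then have "b * q * (A - B) * (2 * (1 - q) + q * (B + A))
           \<le> b * q * (b^n * (P - Q)) * (2 * (1 - q) + q * (Q + P))"
    using q b by (simp add: mult.assoc mult_left_mono)
  then show ?case
    unfolding gw_step_iter_Suc diff_sq A_def[symmetric] B_def[symmetric] P_def[symmetric] Q_def[symmetric]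
    by (simp add: algebra_simps)
qed

lemma gw_step_iter_fixpoint:
  assumes "gw_step b q h = h"
  shows "(gw_step b q ^^ n) h = h"
  using assms by (induction n) auto

lemma gw_step_iter_approx_fixpoint:
  assumes q: "0 \<le> q" "q \<le> 1" and b: "0 \<le> b" "b \<le> 1" and x: "0 \<le> x" "x \<le> 1"
    and h: "0 \<le> h" "h \<le> 1" "gw_step b q h = h"
  shows "\<bar>(gw_step b q ^^ n) x - h\<bar> \<le> b^n"
proof -
  let ?T = "\<lambda>c. gw_step c q ^^ n"
  have "?T b 1 - ?T b 0 \<le> b^n * (?T 1 1 - ?T 1 0)"
    using gw_step_iter_diff_le[OF q b, of 0 1] by simp
  also have "\<dots> \<le> b^n"
    using gw_step_iter_in_unit[OF q, of 1 1 n] gw_step_iter_in_unit[OF q, of 1 0 n]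
      gw_step_iter_mono[OF q, of 1 0 1 n] b
    by (intro mult_right_le_one_le) auto
  finally have "?T b 1 - ?T b 0 \<le> b^n" .
  moreover have "?T b 0 \<le> ?T b x" "?T b x \<le> ?T b 1" "?T b 0 \<le> h" "h \<le> ?T b 1"
    using gw_step_iter_mono[OF q b] x h gw_step_iter_fixpoint[OF h(3), of n] by (metis order.refl)+
  ultimately show ?thesis by linarith
qed

text \<open>The smaller root of \<open>q b s\<^sup>2 - s + (1 - q) = 0\<close>, in a form that stays defined when \<open>q b = 0\<close>.\<close>
definition gw_root :: "real \<Rightarrow> real \<Rightarrow> real" where
  "gw_root b q = 2 * (1 - q) / (1 + sqrt (1 - 4 * q * b * (1 - q)))"

lemma square_le_gw_discriminant:
  fixes q b :: real
  assumes "0 \<le> q" "q \<le> 1" "0 \<le> b" "b \<le> 1"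
  shows "(1 - 2 * q)^2 \<le> 1 - 4 * q * b * (1 - q)"
proof -
  have "q * (1 - q) * b \<le> q * (1 - q)"
    using assms by (intro mult_right_le_one_le) auto
  then show ?thesis by (simp add: power2_eq_square algebra_simps)
qed

lemma gw_root_in_unit:
  assumes "0 \<le> q" "q \<le> 1" "0 \<le> b" "b \<le> 1"
  shows "0 \<le> gw_root b q" "gw_root b q \<le> 1"
proof -
  define D where "D = 1 - 4 * q * b * (1 - q)"
  have "\<bar>1 - 2 * q\<bar> \<le> sqrt D"
    using real_sqrt_le_mono[OF square_le_gw_discriminant[OF assms]] by (simp add: D_def)
  then show "0 \<le> gw_root b q" "gw_root b q \<le> 1"
    using assms by (auto simp: gw_root_def D_def[symmetric] divide_le_eq_1 add_pos_nonneg)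
qed

lemma gw_root_fixpoint:
  assumes "0 \<le> q" "q \<le> 1" "0 \<le> b" "b \<le> 1"
  shows "1 - q + q * (b * (gw_root b q)^2) = gw_root b q"
proof -
  define t where "t = 1 + sqrt (1 - 4 * q * b * (1 - q))"
  have "0 \<le> 1 - 4 * q * b * (1 - q)"
    using square_le_gw_discriminant[OF assms] zero_le_power2 order_trans by blast
  then have t: "0 < t" "t^2 - 2 * t = - 4 * q * b * (1 - q)"
    by (auto simp: t_def power2_eq_square algebra_simps add_pos_nonneg)
  have "1 - q + q * (b * (2 * (1 - q) / t)^2) - 2 * (1 - q) / t
        = (1 - q) * (4 * q * b * (1 - q) - 2 * t + t^2) / t^2"
    using t(1) by (simp add: field_simps power2_eq_square)
  also have "\<dots> = 0" using t(2) by simp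
  finally show ?thesis by (simp add: gw_root_def t_def[symmetric])
qed

lemma gw_root_conjugate:
  assumes "0 < q" "q \<le> 1" "0 < b" "b \<le> 1"
  shows "gw_root b q = (1 - sqrt (1 - 4 * q * b * (1 - q))) / (2 * b * q)"
proof -
  define D where "D = 1 - 4 * q * b * (1 - q)"
  have "0 \<le> D"
    unfolding D_def using square_le_gw_discriminant[of q b] assms zero_le_power2[of "1 - 2 * q"] by linarith
  have "(1 - sqrt D) * (1 + sqrt D) = 1 - (sqrt D)^2"
    by (simp add: power2_eq_square algebra_simps)
  also have "\<dots> = 4 * q * b * (1 - q)"
    using \<open>0 \<le> D\<close> by (simp add: D_def)
  moreover have "0 < 1 + sqrt D"
    using \<open>0 \<le> D\<close> by (simp add: add_pos_nonneg)
  ultimately have "(1 - sqrt D) / (2 * b * q) = 2 * (1 - q) / (1 + sqrt D)"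
    using assms by (simp add: divide_simps)
  then show ?thesis
    by (simp add: gw_root_def D_def)
qed

lemma galpha_eq_gw_root:
  assumes q: "0 \<le> q" "q \<le> 1" and a: "0 \<le> a" "a \<le> 1"
  shows "galpha a q = q * (1 - a) * (gw_root (1 - a) q)^3"
proof -
  consider "a = 1" | "q = 0" | "a < 1" "0 < q" using a q by linarith
  then show ?thesis
  proof cases
    case 3
    define D where "D = 1 - 4 * q * (1 - a) * (1 - q)"
    have root: "gw_root (1 - a) q = (1 - sqrt D) / (2 * (1 - a) * q)"
      using gw_root_conjugate[of q "1 - a"] 3 q a by (simp add: D_def)
    show ?thesis
    proof (cases "a = 0")
      case True
      have sqrt_D: "sqrt D = \<bar>1 - 2 * q\<bar>"
        unfolding D_def True by (simp add: real_sqrt_abs[symmetric] power2_eq_square algebra_simps)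
      show ?thesis
      proof (cases "q \<le> 1/2")
        case True
        then have "gw_root 1 q = 1"
          using sqrt_D root \<open>a = 0\<close> 3 by simp
        then show ?thesis using \<open>a = 0\<close> True by (simp add: galpha_def)
      next
        case False
        then have "gw_root 1 q = (1 - q) / q"
          using sqrt_D root \<open>a = 0\<close> 3 by (simp add: field_simps)
        then show ?thesis using \<open>a = 0\<close> False by (simp add: galpha_def power3_eq_cube power2_eq_square)
      qed
    next
      case False
      have cube_div: "q * c * (x / (2 * c * q))^3 = x^3 / (8 * c^2 * q^2)"
        if "c \<noteq> 0" for c x :: real
        using that 3 by (simp add: power_divide field_simps power3_eq_cube power2_eq_square)
      have "galpha a q = (1 - sqrt D)^3 / (8 * (1 - a)^2 * q^2)"
        using 3 False by (simp add: galpha_def D_def algebra_simps)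
      moreover have "q * (1 - a) * ((1 - sqrt D) / (2 * (1 - a) * q))^3
          = (1 - sqrt D)^3 / (8 * (1 - a)^2 * q^2)"
        by (rule cube_div) (use 3 in simp)
      ultimately show ?thesis
        unfolding root by simp
    qed
  qed (auto simp: galpha_def)
qed

lemma expectation_bind_pmf:
  fixes f :: "'b \<Rightarrow> real"
  assumes bnd: "\<And>y. y \<in> set_pmf (bind_pmf M N) \<Longrightarrow> \<bar>f y\<bar> \<le> B"
  shows "measure_pmf.expectation (bind_pmf M N) f
         = measure_pmf.expectation M (\<lambda>x. measure_pmf.expectation (N x) f)"
proof -
  define g where "g y = (if y \<in> set_pmf (bind_pmf M N) then f y else 0)" for y
  have "\<bar>g y\<bar> \<le> max B 0" for y
    using bnd by (auto simp: g_def simp del: set_bind_pmf intro: le_max_iff_disj[THEN iffD2])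
  then have "measure_pmf.expectation (bind_pmf M N) g
      = measure_pmf.expectation M (\<lambda>x. measure_pmf.expectation (N x) g)"
    unfolding measure_pmf_bind
    by (intro integral_bind[where K="count_space UNIV" and B="max B 0" and B'=1])
       (auto simp: measurable_measure_pmf measure_pmf.emeasure_space_1 space_subprob_algebra
          subprob_space_measure_pmf)
  moreover have "measure_pmf.expectation (bind_pmf M N) f = measure_pmf.expectation (bind_pmf M N) g"
    "measure_pmf.expectation M (\<lambda>x. measure_pmf.expectation (N x) g)
      = measure_pmf.expectation M (\<lambda>x. measure_pmf.expectation (N x) f)"
    by (auto simp: AE_measure_pmf_iff g_def intro!: integral_cong_AE)
  ultimately show ?thesis by simp
qed

lemma expectation_binomial_pmf_power:
  assumes "0 \<le> q" "q \<le> 1"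
  shows "measure_pmf.expectation (binomial_pmf n q) (\<lambda>y. (c::real) ^ y) = (1 - q + q * c) ^ n"
proof -
  have "measure_pmf.expectation (binomial_pmf n q) (\<lambda>y. c ^ y)
      = (\<Sum>k\<le>n. c ^ k * pmf (binomial_pmf n q) k)"
    by (rule integral_measure_pmf_real) (use assms in \<open>auto simp: set_pmf_binomial_eq split: if_splits\<close>)
  also have "\<dots> = (\<Sum>k\<le>n. real (n choose k) * (q * c) ^ k * (1 - q) ^ (n - k))"
    using assms by (intro sum.cong) (auto simp: power_mult_distrib)
  also have "\<dots> = (q * c + (1 - q)) ^ n"
    by (rule binomial_ring[symmetric])
  finally show ?thesis by (simp add: algebra_simps)
qed

lemma expectation_iid_sum_power:
  assumes "0 \<le> c" "c \<le> 1"
  shows "measure_pmf.expectation (iid_sum n p) (\<lambda>y. (c::real) ^ y)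
       = (measure_pmf.expectation p (\<lambda>y. c ^ y)) ^ n"
proof (induction n)
  case 0 then show ?case by simp
next
  case (Suc n)
  have "\<bar>c ^ y\<bar> \<le> 1" for y
    using assms by (simp add: power_le_one)
  then have "measure_pmf.expectation (iid_sum (Suc n) p) (\<lambda>y. c ^ y)
      = measure_pmf.expectation p (\<lambda>x. c ^ x * measure_pmf.expectation (iid_sum n p) (\<lambda>y. c ^ y))"
    by (simp only: iid_sum.simps, subst expectation_bind_pmf[where B=1]) (auto simp: power_add)
  then show ?case
    using Suc by simp
qed

lemma set_pmf_gw_from:
  "zs \<in> set_pmf (gw_from q k z n) \<Longrightarrow> length zs = n \<and> (0 < n \<longrightarrow> zs ! 0 = z)"
  by (induction n arbitrary: k z zs) auto

lemma expectation_gw_from_weighted: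
  assumes q: "0 \<le> q" "q \<le> 1" and b: "0 \<le> b" "b \<le> 1" and x: "0 \<le> x" "x \<le> 1"
    and "1 \<le> k" "m < n"
  shows "measure_pmf.expectation (gw_from q k z n) (\<lambda>zs. b ^ sum_list (take m zs) * x ^ (zs ! m))
      = ((gw_step b q ^^ m) x) ^ z"
  using assms(7,8)
proof (induction m arbitrary: k z n)
  have bnd: "\<bar>b ^ i * x ^ j\<bar> \<le> 1" "\<bar>x ^ j\<bar> \<le> 1" "\<bar>b ^ i * (x ^ j * b ^ l)\<bar> \<le> 1" for i j l
    using b x by (simp_all add: abs_mult power_le_one mult_le_one)
  {
    case 0
    then obtain n' where "n = Suc n'" by (cases n) auto
    then show ?case
      by (simp only: gw_from.simps, subst expectation_bind_pmf[where B=1]) (auto simp: bnd)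
  next
    case (Suc m)
    then obtain n' where n: "n = Suc n'" and "m < n'" by (cases n) auto
    let ?u = "(gw_step b q ^^ m) x"
    have "measure_pmf.expectation (gw_from q k z n)
            (\<lambda>zs. b ^ sum_list (take (Suc m) zs) * x ^ (zs ! Suc m))
       = measure_pmf.expectation (iid_sum z (offspring q k))
           (\<lambda>z'. measure_pmf.expectation (gw_from q (Suc k) z' n')
               (\<lambda>ws. b ^ z * (b ^ sum_list (take m ws) * x ^ (ws ! m))))"
      unfolding n gw_from.simps
      by (subst expectation_bind_pmf[where B=1]) (auto simp: bnd power_add mult_ac)
    also have "\<dots> = measure_pmf.expectation (iid_sum z (binomial_pmf 2 q)) (\<lambda>z'. b ^ z * ?u ^ z')"
      using Suc \<open>m < n'\<close> by (simp add: offspring_def)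
    also have "\<dots> = b ^ z * ((1 - q + q * ?u) ^ 2) ^ z"
      using expectation_iid_sum_power gw_step_iter_in_unit[OF q b x, of m]
        expectation_binomial_pmf_power[OF q] by simp
    also have "\<dots> = ((gw_step b q ^^ Suc m) x) ^ z"
      unfolding gw_step_iter_Suc by (simp add: power_mult_distrib)
    finally show ?case .
  }
qed

lemma expectation_gw_path:
  fixes f :: "nat list \<Rightarrow> real"
  assumes q: "0 \<le> q" "q \<le> 1"
    and bnd: "\<And>zs. zs ! 0 \<le> 1 \<Longrightarrow> \<bar>f zs\<bar> \<le> B" and vanish: "\<And>zs. zs ! 0 = 0 \<Longrightarrow> f zs = 0"
  shows "measure_pmf.expectation (gw_path q L) f
       = q * measure_pmf.expectation (binomial_pmf 3 q)
               (\<lambda>z. measure_pmf.expectation (gw_from q 1 z L) (\<lambda>ws. f (1 # ws)))"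
proof -
  have "measure_pmf.expectation (gw_path q L) f
     = measure_pmf.expectation (bernoulli_pmf q)
         (\<lambda>c. measure_pmf.expectation (gw_from q 0 (of_bool c) (Suc L)) f)"
    unfolding gw_path_def
    by (rule expectation_bind_pmf[where B=B]) (auto simp del: gw_from.simps intro!: bnd dest!: set_pmf_gw_from)
  also have "\<dots> = q * measure_pmf.expectation (gw_from q 0 1 (Suc L)) f"
  proof -
    have "measure_pmf.expectation (gw_from q 0 0 (Suc L)) f = 0"
      by (subst integral_cong_AE[where g="\<lambda>_. 0"])
         (auto simp: AE_measure_pmf_iff vanish simp del: gw_from.simps dest!: set_pmf_gw_from)
    then show ?thesis using q by simp
  qed
  also have "gw_from q 0 1 (Suc L) = bind_pmf (binomial_pmf 3 q) (\<lambda>z. map_pmf (Cons 1) (gw_from q 1 z L))"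
    by (simp add: offspring_def bind_return_pmf')
  finally show ?thesis
    using bnd by (subst (asm) expectation_bind_pmf[where B=B]) auto
qed

lemma expectation_gw_path_weighted:
  assumes q: "0 \<le> q" "q \<le> 1" and b: "0 \<le> b" "b \<le> 1"
  shows "measure_pmf.expectation (gw_path q (Suc l))
           (\<lambda>zs. real (zs ! 0) * b ^ sum_list (take (Suc l) zs))
       = q * b * (1 - q + q * (gw_step b q ^^ l) 1) ^ 3"
proof -
  have "\<bar>real (zs ! 0) * b ^ sum_list (take (Suc l) zs)\<bar> \<le> 1" if "zs ! 0 \<le> 1" for zs
    using that b by (simp add: abs_mult mult_le_one power_le_one)
  then have "measure_pmf.expectation (gw_path q (Suc l))
           (\<lambda>zs. real (zs ! 0) * b ^ sum_list (take (Suc l) zs))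
       = q * measure_pmf.expectation (binomial_pmf 3 q)
           (\<lambda>z. measure_pmf.expectation (gw_from q 1 z (Suc l))
              (\<lambda>ws. b * (b ^ sum_list (take l ws) * 1 ^ (ws ! l))))"
    by (subst expectation_gw_path[OF q, where B=1]) (auto simp: power_add)
  also have "\<dots> = q * measure_pmf.expectation (binomial_pmf 3 q) (\<lambda>z. b * ((gw_step b q ^^ l) 1) ^ z)"
    using expectation_gw_from_weighted[OF q b, of 1 1 l "Suc l"] by simp
  also have "\<dots> = q * b * (1 - q + q * (gw_step b q ^^ l) 1) ^ 3"
    using expectation_binomial_pmf_power[OF q, of 3] by simp
  finally show ?thesis .
qed

text \<open>On the event \<open>Z\<^bsub>L-1\<^esub> = 0\<close> the weight \<open>b\<^bsup>Z\<^bsub>L-1\<^esub>\<^esup>\<close> is replaced by \<open>0\<^bsup>Z\<^bsub>L-1\<^esub>\<^esup>\<close>,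
  so the orbit of \<open>T\<close> now starts at \<open>0\<close>.\<close>
lemma expectation_gw_path_weighted_extinct:
  assumes q: "0 \<le> q" "q \<le> 1" and b: "0 \<le> b" "b \<le> 1"
  shows "measure_pmf.expectation (gw_path q (Suc (Suc j)))
           (\<lambda>zs. real (zs ! 0) * b ^ sum_list (take (Suc (Suc j)) zs)
              * (if zs ! (Suc (Suc j) - 1) = 0 then 1 else 0))
       = q * b * (1 - q + q * (gw_step b q ^^ j) 0) ^ 3"
proof -
  define f where "f zs = real (zs ! 0) * b ^ sum_list (take (Suc (Suc j)) zs)
              * (if zs ! (Suc (Suc j) - 1) = 0 then 1 else 0)" for zs
  have bnd: "\<bar>f zs\<bar> \<le> 1" if "zs ! 0 \<le> 1" for zs
    using that b by (simp add: f_def abs_mult mult_le_one power_le_one)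
  have "measure_pmf.expectation (gw_path q (Suc (Suc j))) f
       = q * measure_pmf.expectation (binomial_pmf 3 q)
           (\<lambda>z. measure_pmf.expectation (gw_from q 1 z (Suc (Suc j))) (\<lambda>ws. f (1 # ws)))"
    by (rule expectation_gw_path[OF q bnd]) (simp_all add: f_def)
  also have "\<dots> = q * measure_pmf.expectation (binomial_pmf 3 q)
           (\<lambda>z. measure_pmf.expectation (gw_from q 1 z (Suc (Suc j)))
              (\<lambda>ws. b * (b ^ sum_list (take j ws) * 0 ^ (ws ! j))))"
  proof -
    have "f (1 # ws) = b * (b ^ sum_list (take j ws) * 0 ^ (ws ! j))"
      if "ws \<in> set_pmf (gw_from q 1 z (Suc (Suc j)))" for z ws
      using set_pmf_gw_from[OF that] by (simp add: f_def take_Suc_conv_app_nth power_add)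
    then have "measure_pmf.expectation (gw_from q 1 z (Suc (Suc j))) (\<lambda>ws. f (1 # ws))
        = measure_pmf.expectation (gw_from q 1 z (Suc (Suc j)))
            (\<lambda>ws. b * (b ^ sum_list (take j ws) * 0 ^ (ws ! j)))" for z
      by (intro integral_cong_AE) (auto simp: AE_measure_pmf_iff simp del: gw_from.simps)
    then show ?thesis
      by presburger
  qed
  also have "\<dots> = q * measure_pmf.expectation (binomial_pmf 3 q) (\<lambda>z. b * ((gw_step b q ^^ j) 0) ^ z)"
    using expectation_gw_from_weighted[OF q b, of 0 1 j "Suc (Suc j)"] by simp
  also have "\<dots> = q * b * (1 - q + q * (gw_step b q ^^ j) 0) ^ 3"
    using expectation_binomial_pmf_power[OF q, of 3] by simp
  finally show ?thesis
    unfolding f_def .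
qed

lemma galpha_in_unit:
  assumes q: "0 \<le> q" "q \<le> 1" and a: "0 \<le> a" "a \<le> 1"
  shows "0 \<le> galpha a q" "galpha a q \<le> 1"
  using gw_root_in_unit[OF q, of "1 - a"] q a
  by (auto simp: galpha_eq_gw_root[OF q a] mult_le_one power_le_one)

lemma cube_diff_le:
  fixes x y :: real
  assumes "0 \<le> x" "x \<le> 1" "0 \<le> y" "y \<le> 1"
  shows "\<bar>x^3 - y^3\<bar> \<le> 3 * \<bar>x - y\<bar>"
proof -
  have "x^2 + x * y + y^2 \<le> 3"
    using assms mult_le_one[of x y] power_le_one[of x 2] power_le_one[of y 2] by linarith
  moreover have "x^3 - y^3 = (x - y) * (x^2 + x * y + y^2)"
    by (simp add: power2_eq_square power3_eq_cube algebra_simps)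
  moreover have "0 \<le> x^2 + x * y + y^2"
    using assms by simp
  ultimately show ?thesis
    using mult_left_mono[of "x^2 + x * y + y^2" 3 "\<bar>x - y\<bar>"] by (simp add: abs_mult mult.commute)
qed

lemma gw_step_iter_cube_approx_galpha:
  assumes q: "0 \<le> q" "q \<le> 1" and a: "0 \<le> a" "a \<le> 1" and x: "0 \<le> x" "x \<le> 1"
  shows "\<bar>q * (1 - a) * (1 - q + q * (gw_step (1 - a) q ^^ n) x) ^ 3 - galpha a q\<bar>
           \<le> 3 * (1 - a) ^ Suc n"
proof -
  define b where "b = 1 - a"
  have b: "0 \<le> b" "b \<le> 1" using a by (auto simp: b_def)
  define s where "s = gw_root b q"
  have s: "0 \<le> s" "s \<le> 1" and root: "1 - q + q * (b * s^2) = s"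
    using gw_root_in_unit[OF q b] gw_root_fixpoint[OF q b] by (auto simp: s_def)
  have h: "0 \<le> b * s^2" "b * s^2 \<le> 1" "gw_step b q (b * s^2) = b * s^2"
    using s b root by (auto simp: gw_step_def mult_le_one power_le_one)
  define u where "u = (gw_step b q ^^ n) x"
  have u: "0 \<le> u" "u \<le> 1"
    using gw_step_iter_in_unit[OF q b x] by (auto simp: u_def)
  have "(1 - q + q * u) - s = q * (u - b * s^2)"
    by (subst root[symmetric]) (simp add: algebra_simps)
  then have "\<bar>(1 - q + q * u) - s\<bar> = q * \<bar>u - b * s^2\<bar>"
    using q by (simp add: abs_mult)
  also have "\<dots> \<le> b ^ n"
    using gw_step_iter_approx_fixpoint[OF q b x h, of n] q mult_left_le_one_le[of "\<bar>u - b * s^2\<bar>" q]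
    unfolding u_def by auto
  finally have "\<bar>(1 - q + q * u)^3 - s^3\<bar> \<le> 3 * b ^ n"
    using cube_diff_le[OF convex_comb_in_unit[OF q u] s] by (smt (verit))
  then have "q * b * \<bar>(1 - q + q * u)^3 - s^3\<bar> \<le> 1 * b * (3 * b ^ n)"
    using q b by (intro mult_mono) auto
  then show ?thesis
    using galpha_eq_gw_root[OF q a] q b
    by (simp add: b_def[symmetric] s_def[symmetric] u_def[symmetric] abs_mult flip: right_diff_distrib)
qed

lemma gw_path_weighted_approx_galpha:
  assumes q: "0 \<le> q" "q \<le> 1" and a: "0 \<le> a" "a \<le> 1"
  shows "\<bar>measure_pmf.expectation (gw_path q L)
            (\<lambda>zs. real (zs ! 0) * (1 - a) ^ sum_list (take L zs)) - galpha a q\<bar>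
           \<le> 3 * (1 - a) ^ L"
proof (cases L)
  case 0
  have "measure_pmf.expectation (gw_path q 0) (\<lambda>zs. real (zs ! 0) * (1 - a) ^ sum_list (take 0 zs)) = q"
    by (subst expectation_gw_path[OF q, where B=1]) auto
  then show ?thesis
    using 0 q galpha_in_unit[OF q a] by simp
next
  case (Suc l)
  then show ?thesis
    using expectation_gw_path_weighted[OF q, of "1 - a" l] gw_step_iter_cube_approx_galpha[OF q a, of 1 l] a
    by simp
qed

lemma gw_path_weighted_extinct_approx_galpha:
  assumes q: "0 \<le> q" "q \<le> 1" and a: "0 \<le> a" "a \<le> 1" and "1 \<le> L"
  shows "\<bar>measure_pmf.expectation (gw_path q L)
            (\<lambda>zs. real (zs ! 0) * (1 - a) ^ sum_list (take L zs) * (if zs ! (L - 1) = 0 then 1 else 0))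
          - galpha a q\<bar> \<le> 3 * (1 - a) ^ (L - 1)"
proof (cases "L = 1")
  case True
  have "(\<lambda>zs. real (zs ! 0) * (1 - a) ^ sum_list (take 1 zs) * (if zs ! (1 - 1) = 0 then 1 else 0))
      = (\<lambda>_. 0)"
    by (auto simp: fun_eq_iff)
  then show ?thesis
    unfolding True using galpha_in_unit[OF q a] by simp
next
  case False
  then obtain j where "L = Suc (Suc j)"
    using \<open>1 \<le> L\<close> by (metis One_nat_def Suc_le_D not0_implies_Suc)
  then show ?thesis
    using expectation_gw_path_weighted_extinct[OF q, of "1 - a" j] gw_step_iter_cube_approx_galpha[OF q a, of 0 j] a
    by simp
qed

lemma one_minus_power_le_exp:
  fixes a :: real
  assumes "a \<le> 1"
  shows "(1 - a) ^ n \<le> exp (- a * real n)"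
proof -
  have "(1 - a) ^ n \<le> exp (- a) ^ n"
    using assms exp_ge_add_one_self[of "- a"] by (intro power_mono) auto
  then show ?thesis
    by (simp add: exp_of_nat_mult[symmetric] mult.commute)
qed

theorem mainTheorem11:
  fixes alpha :: "nat \<Rightarrow> real" and a :: real
  assumes "\<And>N. 0 \<le> alpha N \<and> alpha N \<le> 1"
    and "alpha \<longlonglongrightarrow> a"
  shows "\<exists>C'>0. \<forall>q\<in>{0..1}. \<forall>N.
     \<bar>measure_pmf.expectation (gw_path q (LN N))
        (\<lambda>zs. real (zs ! 0) * (1 - alpha N) ^ sum_list (take (LN N) zs))
      - galpha (alpha N) q\<bar> \<le> C' * exp (- alpha N * real (LN N))
   \<and> (LN N \<ge> 1 \<longrightarrow>
     \<bar>measure_pmf.expectation (gw_path q (LN N))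
        (\<lambda>zs. real (zs ! 0) * (1 - alpha N) ^ sum_list (take (LN N) zs)
               * (if zs ! (LN N - 1) = 0 then 1 else 0))
      - galpha (alpha N) q\<bar> \<le> C' * exp (- alpha N * real (LN N)))"
  \<comment> \<open>the constant is uniform in the sequence\<close>
proof (intro exI[of _ 9] conjI ballI allI impI)
  fix q :: real and N :: nat
  assume "q \<in> {0..1}"
  then have q: "0 \<le> q" "q \<le> 1" by auto
  have a: "0 \<le> alpha N" "alpha N \<le> 1" using assms(1) by auto
  have "(1 - alpha N) ^ LN N \<le> exp (- alpha N * real (LN N))"
    using one_minus_power_le_exp a by blast
  then show "\<bar>measure_pmf.expectation (gw_path q (LN N))
        (\<lambda>zs. real (zs ! 0) * (1 - alpha N) ^ sum_list (take (LN N) zs))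
      - galpha (alpha N) q\<bar> \<le> 9 * exp (- alpha N * real (LN N))"
    using gw_path_weighted_approx_galpha[OF q a, of "LN N"] by simp
  assume "1 \<le> LN N"
  have "(1 - alpha N) ^ (LN N - 1) \<le> exp (- alpha N * real (LN N - 1))"
    using one_minus_power_le_exp a by blast
  also have "\<dots> = exp (alpha N + - alpha N * real (LN N))"
    using \<open>1 \<le> LN N\<close> by (simp add: of_nat_diff algebra_simps)
  also have "\<dots> = exp (alpha N) * exp (- alpha N * real (LN N))"
    by (rule exp_add)
  also have "\<dots> \<le> 3 * exp (- alpha N * real (LN N))"
    using exp_le a(2) by (intro mult_right_mono) (auto intro: order_trans)
  finally have "(1 - alpha N) ^ (LN N - 1) \<le> 3 * exp (- alpha N * real (LN N))" .
  then show "\<bar>measure_pmf.expectation (gw_path q (LN N))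
        (\<lambda>zs. real (zs ! 0) * (1 - alpha N) ^ sum_list (take (LN N) zs)
               * (if zs ! (LN N - 1) = 0 then 1 else 0))
      - galpha (alpha N) q\<bar> \<le> 9 * exp (- alpha N * real (LN N))"
    using gw_path_weighted_extinct_approx_galpha[OF q a \<open>1 \<le> LN N\<close>] by simp
qed simp

end
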